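(* Let $\{S;\tilde w_1,\dots,\tilde w_N;p_1,\dots,p_N\}$ be a DIFS, and suppose that for some index $i$ the minimal absorbing set $\mathcal M[\tilde w_i,S]$ exists. Let $\mathcal A_k$ be a recurrent communication class of the associated Markov chain. If there is $\tilde x\in S$ with $\tilde x\in\mathcal A_k$ and $\tilde x\in\mathcal B[\mathcal M_j[\tilde w_i,S]]$ for some component $\mathcal M_j[\tilde w_i,S]$ of $\mathcal M[\tilde w_i,S]$, then $\mathcal M_j[\tilde w_i,S]\subset\mathcal A_k$.
   Context: $\mathcal D^n(\delta)=\{\delta m:m\in\mathbb Z^n\}$ for fixed $\delta>0$; $\mathbb N=\{1,2,\dots\}$. A DIFS $\{S;\tilde w_1,\dots,\tilde w_N;p_1,\dots,p_N\}$ consists of $S\subset\mathcal D^n(\delta)$, maps $\tilde w_i:S\to S$, and functions $p_i:S\to(0,1]$ with $\sum_ip_i(\tilde x)=1$ for every $\tilde x\in S$; its associated Markov chain on $S$ has transition probabilities $P(\tilde x,\tilde y)=\sum_ip_i(\tilde x)\mathbf 1_{\{\tilde y\}}(\tilde w_i(\tilde x))$. Accessibility: $P^k(\tilde x,\tilde y)>0$ for some $k\ge1$; a communication class is a maximal nonempty set of mutually accessible states; a state is recurrent if the chain started there returns to it in finitely many steps a.s.; a recurrent communication class is a communication class of recurrent states. Absorbing sets: for a map $\tilde w$ and nonempty $C$ with $\tilde w(C)\subset C$, a set $\Lambda\subset C$ is absorbing for $\tilde w$ in $C$ if for each $\tilde x\in C$ there is $N$ with $\tilde w^{\circ i}(\tilde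 x)\in\Lambda$ for all $i\ge N$. If the intersection of all absorbing sets for $\tilde w$ in $C$ is itself absorbing in $C$, it is the minimal absorbing set $\mathcal M[\tilde w,C]$ (and it is said to exist). Its components are the equivalence classes of the relation $\tilde x\sim\tilde y\iff\tilde w^{\circ j}(\tilde x)=\tilde w^{\circ l}(\tilde y)$ for some $j,l\in\mathbb N$; the basin of a component $\mathcal M_j$ is $\mathcal B[\mathcal M_j]=\{\tilde x\in C:\exists i\in\mathbb N,\ \tilde w^{\circ i}(\tilde x)\in\mathcal M_j\}$. *)

theory Defs
  imports "HOL-Analysis.Analysis"
begin

definition lattice :: "real \<Rightarrow> (real^'n) set" where
  "lattice \<delta> = {x. \<exists>m::int^'n. x = \<delta> *\<^sub>R (\<chi> i. real_of_int (m $ i))}"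

definition is_DIFS ::
  "real \<Rightarrow> (real^'n) set \<Rightarrow> nat \<Rightarrow> (nat \<Rightarrow> real^'n \<Rightarrow> real^'n) \<Rightarrow> (nat \<Rightarrow> real^'n \<Rightarrow> real) \<Rightarrow> bool" where
  "is_DIFS \<delta> S N w p \<longleftrightarrow> \<delta> > 0 \<and> N \<ge> 1 \<and> S \<subseteq> lattice \<delta> \<and>
     (\<forall>i<N. w i ` S \<subseteq> S) \<and>
     (\<forall>i<N. \<forall>x\<in>S. 0 < p i x \<and> p i x \<le> 1) \<and>
     (\<forall>x\<in>S. (\<Sum>i<N. p i x) = 1)"

definition trans_prob :: "nat \<Rightarrow> (nat \<Rightarrow> 'a \<Rightarrow> 'a) \<Rightarrow> (nat \<Rightarrow> 'a \<Rightarrow> real) \<Rightarrow> 'a \<Rightarrow> 'a \<Rightarrow> real" where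
  "trans_prob N w p x y = (\<Sum>i<N. p i x * (if w i x = y then 1 else 0))"

text \<open>k-step transition probabilities; P^(k+1)(x,y) = sum_z P(x,z) P^k(z,y),
  where the sum over z reduces to the finitely many images w_i x.\<close>
fun trans_pow :: "nat \<Rightarrow> (nat \<Rightarrow> 'a \<Rightarrow> 'a) \<Rightarrow> (nat \<Rightarrow> 'a \<Rightarrow> real) \<Rightarrow> nat \<Rightarrow> 'a \<Rightarrow> 'a \<Rightarrow> real" where
  "trans_pow N w p 0 x y = (if x = y then 1 else 0)"
| "trans_pow N w p (Suc k) x y = (\<Sum>i<N. p i x * trans_pow N w p k (w i x) y)"

definition accessible :: "nat \<Rightarrow> (nat \<Rightarrow> 'a \<Rightarrow> 'a) \<Rightarrow> (nat \<Rightarrow> 'a \<Rightarrow> real) \<Rightarrow> 'a \<Rightarrow> 'a \<Rightarrow> bool" where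
  "accessible N w p x y \<longleftrightarrow> (\<exists>k\<ge>1. trans_pow N w p k x y > 0)"

definition mutually_accessible_set ::
  "nat \<Rightarrow> (nat \<Rightarrow> 'a \<Rightarrow> 'a) \<Rightarrow> (nat \<Rightarrow> 'a \<Rightarrow> real) \<Rightarrow> 'a set \<Rightarrow> bool" where
  "mutually_accessible_set N w p C \<longleftrightarrow>
     (\<forall>x\<in>C. \<forall>y\<in>C. x \<noteq> y \<longrightarrow> accessible N w p x y \<and> accessible N w p y x)"

definition comm_class ::
  "'a set \<Rightarrow> nat \<Rightarrow> (nat \<Rightarrow> 'a \<Rightarrow> 'a) \<Rightarrow> (nat \<Rightarrow> 'a \<Rightarrow> real) \<Rightarrow> 'a set \<Rightarrow> bool" where
  "comm_class S N w p C \<longleftrightarrow> C \<noteq> {} \<and> C \<subseteq> S \<and> mutually_accessible_set N w p C \<and>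
     (\<forall>D. C \<subseteq> D \<and> D \<subseteq> S \<and> mutually_accessible_set N w p D \<longrightarrow> D = C)"

fun first_passage :: "nat \<Rightarrow> (nat \<Rightarrow> 'a \<Rightarrow> 'a) \<Rightarrow> (nat \<Rightarrow> 'a \<Rightarrow> real) \<Rightarrow> nat \<Rightarrow> 'a \<Rightarrow> 'a \<Rightarrow> real" where
  "first_passage N w p 0 x y = 0"
| "first_passage N w p (Suc 0) x y = trans_prob N w p x y"
| "first_passage N w p (Suc (Suc n)) x y =
     (\<Sum>i<N. p i x * (if w i x = y then 0 else first_passage N w p (Suc n) (w i x) y))"

definition recurrent :: "nat \<Rightarrow> (nat \<Rightarrow> 'a \<Rightarrow> 'a) \<Rightarrow> (nat \<Rightarrow> 'a \<Rightarrow> real) \<Rightarrow> 'a \<Rightarrow> bool" where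
  "recurrent N w p x \<longleftrightarrow> (\<Sum>n. first_passage N w p n x x) = 1"

definition recurrent_comm_class ::
  "'a set \<Rightarrow> nat \<Rightarrow> (nat \<Rightarrow> 'a \<Rightarrow> 'a) \<Rightarrow> (nat \<Rightarrow> 'a \<Rightarrow> real) \<Rightarrow> 'a set \<Rightarrow> bool" where
  "recurrent_comm_class S N w p C \<longleftrightarrow> comm_class S N w p C \<and> (\<forall>x\<in>C. recurrent N w p x)"

definition absorbing :: "('a \<Rightarrow> 'a) \<Rightarrow> 'a set \<Rightarrow> 'a set \<Rightarrow> bool" where
  "absorbing f C \<Lambda> \<longleftrightarrow> \<Lambda> \<subseteq> C \<and> (\<forall>x\<in>C. \<exists>N. \<forall>i\<ge>N. (f ^^ i) x \<in> \<Lambda>)"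

definition min_absorbing :: "('a \<Rightarrow> 'a) \<Rightarrow> 'a set \<Rightarrow> 'a set" where
  "min_absorbing f C = \<Inter>{\<Lambda>. absorbing f C \<Lambda>}"

definition min_absorbing_exists :: "('a \<Rightarrow> 'a) \<Rightarrow> 'a set \<Rightarrow> bool" where
  "min_absorbing_exists f C \<longleftrightarrow> C \<noteq> {} \<and> f ` C \<subseteq> C \<and> absorbing f C (min_absorbing f C)"

definition orbit_rel :: "('a \<Rightarrow> 'a) \<Rightarrow> 'a \<Rightarrow> 'a \<Rightarrow> bool" where
  "orbit_rel f x y \<longleftrightarrow> (\<exists>j\<ge>1. \<exists>l\<ge>1. (f ^^ j) x = (f ^^ l) y)"

definition absorbing_components :: "('a \<Rightarrow> 'a) \<Rightarrow> 'a set \<Rightarrow> 'a set set" where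
  "absorbing_components f C = (\<lambda>x. {y \<in> min_absorbing f C. orbit_rel f x y}) ` min_absorbing f C"

definition basin :: "('a \<Rightarrow> 'a) \<Rightarrow> 'a set \<Rightarrow> 'a set \<Rightarrow> 'a set" where
  "basin f C M = {x \<in> C. \<exists>i\<ge>1. (f ^^ i) x \<in> M}"

end

theory Submission
  imports Defs
begin

text \<open>Since the minimal absorbing set of \<open>f = w\<^sub>i\<close> is minimal, each of its points is periodic
  under \<open>f\<close>; together with the orbit relation this puts every point of a component on the
  forward \<open>f\<close>-orbit of every point of its basin. So \<open>x\<close> leads to each point of \<open>M\<^sub>j\<close> with
  positive probability, by always choosing the map \<open>w\<^sub>i\<close>. A recurrent state leads only to
  states that lead back to it: otherwise, with positive probability, the chain reaches a state
  from which it can never return, and the return probability is less than \<open>1\<close>. Hence the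
  recurrent class \<open>A\<close> is closed and contains \<open>M\<^sub>j\<close>.\<close>

lemma funpow_add_apply: "(f ^^ (m + n)) x = (f ^^ m) ((f ^^ n) x)"
  by (simp add: funpow_add)

lemma min_absorbing_periodic:
  assumes ex: "min_absorbing_exists f C" and z: "z \<in> min_absorbing f C"
  shows "\<exists>q\<ge>1. (f ^^ q) z = z"
proof (rule ccontr)
  assume aperiodic: "\<not> (\<exists>q\<ge>1. (f ^^ q) z = z)"
  let ?M = "min_absorbing f C"
  have M: "absorbing f C ?M" using ex by (simp add: min_absorbing_exists_def)
  have "absorbing f C (?M - {z})"
    unfolding absorbing_def
  proof (intro conjI ballI)
    show "?M - {z} \<subseteq> C" using M by (auto simp: absorbing_def)
  next
    fix y assume "y \<in> C"
    then obtain n where n: "\<forall>i\<ge>n. (f ^^ i) y \<in> ?M" using M by (auto simp: absorbing_def)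
    show "\<exists>n. \<forall>i\<ge>n. (f ^^ i) y \<in> ?M - {z}"
    proof (cases "\<exists>a. (f ^^ a) y = z")
      case True
      then obtain a where a: "(f ^^ a) y = z" by blast
      have "(f ^^ i) y \<noteq> z" if "i > a" for i
      proof
        assume "(f ^^ i) y = z"
        moreover have "(f ^^ i) y = (f ^^ (i - a)) z"
          using that a funpow_add_apply[where f = f and m = "i - a" and n = a and x = y] by simp
        ultimately show False using aperiodic that by auto
      qed
      then show ?thesis using n by (intro exI[of _ "max n (Suc a)"]) auto
    qed (use n in blast)
  qed
  then have "?M \<subseteq> ?M - {z}" by (auto simp: min_absorbing_def)
  then show False using z by blast
qed

lemma orbit_rel_sym: "orbit_rel f x y \<Longrightarrow> orbit_rel f y x"
  unfolding orbit_rel_def by metis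

lemma orbit_rel_trans:
  assumes "orbit_rel f x y" and "orbit_rel f y z"
  shows "orbit_rel f x z"
proof -
  obtain j l where jl: "j \<ge> 1" "l \<ge> 1" "(f ^^ j) x = (f ^^ l) y"
    using assms(1) by (auto simp: orbit_rel_def)
  obtain j' l' where jl': "j' \<ge> 1" "l' \<ge> 1" "(f ^^ j') y = (f ^^ l') z"
    using assms(2) by (auto simp: orbit_rel_def)
  have "(f ^^ (j' + j)) x = (f ^^ (l + j')) y"
    by (simp only: funpow_add_apply jl(3)) (simp only: funpow_add_apply[symmetric] add.commute)
  also have "\<dots> = (f ^^ (l + l')) z"
    by (simp only: funpow_add_apply jl'(3))
  finally show ?thesis using jl jl' unfolding orbit_rel_def by (intro exI conjI) auto
qed

lemma periodic_orbit_rel_reachable: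
  assumes "q \<ge> 1" and "(f ^^ q) z = z" and "orbit_rel f z y"
  shows "\<exists>m. (f ^^ m) y = z"
proof -
  obtain j l where jl: "(f ^^ j) z = (f ^^ l) y"
    using assms(3) by (auto simp: orbit_rel_def)
  have "(f ^^ (q * j)) z = z"
    using funpow_mod_eq[where f = f and n = q and m = "q * j"] assms(2) by simp
  moreover have "q * j = (q * j - j) + j" using assms(1) by simp
  ultimately have "z = (f ^^ (q * j - j)) ((f ^^ j) z)"
    using funpow_add_apply[where f = f and m = "q * j - j" and n = j and x = z] by simp
  then have "z = (f ^^ (q * j - j + l)) y" by (simp add: funpow_add_apply jl)
  then show ?thesis by blast
qed

lemma basin_reaches_component:
  assumes ex: "min_absorbing_exists f C" and M: "M \<in> absorbing_components f C"
    and x: "x \<in> basin f C M" and z: "z \<in> M"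
  shows "\<exists>k\<ge>1. (f ^^ k) x = z"
proof -
  obtain c where M_def: "M = {y \<in> min_absorbing f C. orbit_rel f c y}"
    using M unfolding absorbing_components_def by blast
  obtain i where i: "i \<ge> 1" "(f ^^ i) x \<in> M" using x by (auto simp: basin_def)
  have "orbit_rel f c z" "orbit_rel f c ((f ^^ i) x)" using z i(2) M_def by auto
  then have orbit: "orbit_rel f z ((f ^^ i) x)" by (rule orbit_rel_trans[OF orbit_rel_sym])
  obtain q where q: "q \<ge> 1" "(f ^^ q) z = z"
    using min_absorbing_periodic[OF ex] z unfolding M_def by blast
  obtain m where "(f ^^ m) ((f ^^ i) x) = z"
    using periodic_orbit_rel_reachable[OF q orbit] by blast
  then have "(f ^^ (m + i)) x = z" by (simp add: funpow_add_apply)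
  then show ?thesis using i(1) by (intro exI[of _ "m + i"]) simp
qed

text \<open>The taboo probability \<open>\<^sub>xP\<^sup>k(u, z)\<close>: the chain started at \<open>u\<close> is at \<open>z\<close> at time \<open>k\<close>
  without having visited \<open>x\<close> at any of the times \<open>1, \<dots>, k\<close>.\<close>

fun taboo_pow :: "nat \<Rightarrow> (nat \<Rightarrow> 'a \<Rightarrow> 'a) \<Rightarrow> (nat \<Rightarrow> 'a \<Rightarrow> real) \<Rightarrow> 'a \<Rightarrow> nat \<Rightarrow> 'a \<Rightarrow> 'a \<Rightarrow> real"
  where
    "taboo_pow N w p x 0 u z = (if u = z then 1 else 0)"
  | "taboo_pow N w p x (Suc k) u z =
       (\<Sum>l<N. p l u * (if w l u = x then 0 else taboo_pow N w p x k (w l u) z))"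

locale ifs_markov_chain =
  fixes S :: "'a set" and N :: nat and w :: "nat \<Rightarrow> 'a \<Rightarrow> 'a" and p :: "nat \<Rightarrow> 'a \<Rightarrow> real"
  assumes maps_into: "\<And>l u. l < N \<Longrightarrow> u \<in> S \<Longrightarrow> w l u \<in> S"
    and prob_pos: "\<And>l u. l < N \<Longrightarrow> u \<in> S \<Longrightarrow> 0 < p l u"
    and prob_sum: "\<And>u. u \<in> S \<Longrightarrow> (\<Sum>l<N. p l u) = 1"
begin

lemma prob_nonneg: "l < N \<Longrightarrow> u \<in> S \<Longrightarrow> 0 \<le> p l u"
  using prob_pos less_imp_le by blast

lemma sum_weighted_le_1:
  assumes "u \<in> S" and "\<And>l. l < N \<Longrightarrow> g l \<le> 1"
  shows "(\<Sum>l<N. p l u * g l) \<le> 1"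
proof -
  have "(\<Sum>l<N. p l u * g l) \<le> (\<Sum>l<N. p l u)"
    using assms prob_pos by (intro sum_mono) (simp add: mult_left_le)
  then show ?thesis using prob_sum[OF assms(1)] by simp
qed

lemma sum_weighted_pos:
  assumes "u \<in> S" and "\<And>l. l < N \<Longrightarrow> 0 \<le> g l" and "l < N" and "0 < g l"
  shows "0 < (\<Sum>l<N. p l u * g l)"
proof -
  have "0 < p l u * g l" using assms prob_pos by simp
  also have "\<dots> \<le> (\<Sum>l<N. p l u * g l)"
    using assms by (intro member_le_sum) (auto simp: prob_nonneg)
  finally show ?thesis .
qed

lemma sum_weighted_pos_obtain:
  assumes "0 < (\<Sum>l<N. p l u * g l)" and "u \<in> S"
  obtains l where "l < N" and "0 < g l"
proof -
  have "\<not> (\<forall>l<N. g l \<le> 0)"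
proof
    assume "\<forall>l<N. g l \<le> 0"
    then have "(\<Sum>l<N. p l u * g l) \<le> 0"
      using assms(2) by (intro sum_nonpos) (simp add: mult_nonneg_nonpos prob_nonneg)
    with assms(1) show False by simp
  qed
  then show ?thesis using that by force
qed

lemma trans_pow_nonneg: "u \<in> S \<Longrightarrow> 0 \<le> trans_pow N w p k u y"
  by (induction k arbitrary: u) (auto intro!: sum_nonneg simp: maps_into prob_nonneg)

lemma funpow_maps_into: "l < N \<Longrightarrow> u \<in> S \<Longrightarrow> (w l ^^ k) u \<in> S"
  by (induction k) (auto simp: maps_into)

lemma trans_pow_funpow_pos: "l < N \<Longrightarrow> u \<in> S \<Longrightarrow> 0 < trans_pow N w p k u ((w l ^^ k) u)"
proof (induction k arbitrary: u)
  case (Suc k)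
  then show ?case
    by (simp del: funpow.simps add: funpow_Suc_right maps_into trans_pow_nonneg
        sum_weighted_pos[where l = l])
qed simp

lemma trans_pow_mult_le:
  "u \<in> S \<Longrightarrow> trans_pow N w p k u v * trans_pow N w p m v y \<le> trans_pow N w p (k + m) u y"
proof (induction k arbitrary: u)
  case (Suc k)
  have "trans_pow N w p (Suc k) u v * trans_pow N w p m v y
      = (\<Sum>l<N. p l u * (trans_pow N w p k (w l u) v * trans_pow N w p m v y))"
    by (simp add: sum_distrib_right mult.assoc)
  also have "\<dots> \<le> (\<Sum>l<N. p l u * trans_pow N w p (k + m) (w l u) y)"
    using Suc by (intro sum_mono mult_left_mono) (auto simp: maps_into prob_nonneg)
  finally show ?case by simp
qed (simp add: trans_pow_nonneg)

lemma accessible_trans: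
  assumes "accessible N w p a b" and "accessible N w p b c" and "a \<in> S"
  shows "accessible N w p a c"
proof -
  obtain k m where "k \<ge> 1" "0 < trans_pow N w p k a b" "0 < trans_pow N w p m b c"
    using assms(1,2) by (auto simp: accessible_def)
  moreover have "trans_pow N w p k a b * trans_pow N w p m b c \<le> trans_pow N w p (k + m) a c"
    using assms(3) by (rule trans_pow_mult_le)
  ultimately show ?thesis
    unfolding accessible_def by (metis mult_pos_pos order.strict_trans2 trans_le_add1)
qed

lemma first_passage_nonneg: "u \<in> S \<Longrightarrow> 0 \<le> first_passage N w p n u x"
  by (induction n arbitrary: u rule: induct_nat_012)
    (auto simp: trans_prob_def maps_into prob_nonneg intro!: sum_nonneg mult_nonneg_nonneg)

lemma first_passage_le_trans_pow: "u \<in> S \<Longrightarrow> first_passage N w p n u x \<le> trans_pow N w p n u x"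
proof (induction n arbitrary: u rule: induct_nat_012)
  case (ge2 n)
  have "p l u * (if w l u = x then 0 else first_passage N w p (Suc n) (w l u) x)
      \<le> p l u * trans_pow N w p (Suc n) (w l u) x" if "l < N" for l
    using ge2 that by (intro mult_left_mono)
      (auto simp: maps_into prob_nonneg trans_pow_nonneg simp del: trans_pow.simps)
  then show ?case
    unfolding first_passage.simps trans_pow.simps(2)[of N w p "Suc n"] by (intro sum_mono) simp
qed (simp_all add: trans_prob_def)

text \<open>\<open>hit_before n u x\<close> is the probability that the chain started at \<open>u\<close> visits \<open>x\<close> at one of
  the times \<open>1, \<dots>, n - 1\<close>.\<close>

definition hit_before :: "nat \<Rightarrow> 'a \<Rightarrow> 'a \<Rightarrow> real" where
  "hit_before n u x = (\<Sum>m<n. first_passage N w p m u x)"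

lemma hit_before_Suc_Suc:
  "hit_before (Suc (Suc n)) u x =
     (\<Sum>l<N. p l u * (if w l u = x then 1 else hit_before (Suc n) (w l u) x))"
proof (induction n arbitrary: u)
  case 0
  show ?case by (simp add: hit_before_def trans_prob_def cong: if_cong)
next
  case (Suc n)
  have "hit_before (Suc (Suc (Suc n))) u x
      = hit_before (Suc (Suc n)) u x + first_passage N w p (Suc (Suc n)) u x"
    by (simp add: hit_before_def)
  also have "\<dots> = (\<Sum>l<N. p l u * (if w l u = x then 1 else hit_before (Suc n) (w l u) x)
      + p l u * (if w l u = x then 0 else first_passage N w p (Suc n) (w l u) x))"
    by (simp only: Suc.IH first_passage.simps sum.distrib)
  also have "\<dots> = (\<Sum>l<N. p l u * (if w l u = x then 1 else hit_before (Suc (Suc n)) (w l u) x))"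
    by (intro sum.cong) (auto simp: hit_before_def distrib_left)
  finally show ?case .
qed

lemma hit_before_mono: "u \<in> S \<Longrightarrow> m \<le> n \<Longrightarrow> hit_before m u x \<le> hit_before n u x"
  unfolding hit_before_def by (intro sum_mono2) (auto simp: first_passage_nonneg)

lemma hit_before_le_1: "u \<in> S \<Longrightarrow> hit_before n u x \<le> 1"
proof -
  have "u \<in> S \<Longrightarrow> hit_before (Suc n) u x \<le> 1" for u
  proof (induction n arbitrary: u)
    case (Suc n)
    then show ?case unfolding hit_before_Suc_Suc by (intro sum_weighted_le_1) (auto simp: maps_into)
  qed (simp add: hit_before_def)
  then show "u \<in> S \<Longrightarrow> hit_before n u x \<le> 1"
    using hit_before_mono[of u n "Suc n" x] by force
qed

lemma hit_before_eq_0: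
  assumes "u \<in> S" and "\<not> accessible N w p u x"
  shows "hit_before n u x = 0"
proof -
  have "first_passage N w p m u x = 0" for m
  proof (cases "m = 0")
    case False
    then have "trans_pow N w p m u x \<le> 0"
      using assms(2) by (metis accessible_def less_one not_le)
    then show ?thesis
      using first_passage_le_trans_pow first_passage_nonneg assms(1) by (meson order_antisym order_trans)
  qed simp
  then show ?thesis by (simp add: hit_before_def)
qed

lemma taboo_pow_nonneg: "u \<in> S \<Longrightarrow> 0 \<le> taboo_pow N w p x k u z"
  by (induction k arbitrary: u) (auto simp: maps_into prob_nonneg intro!: sum_nonneg)

text \<open>If \<open>z\<close> cannot reach \<open>x\<close>, reaching \<open>z\<close> before returning to \<open>x\<close> and ever returning to \<open>x\<close>
  are disjoint events.\<close>

lemma hit_before_add_taboo_pow_le_1: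
  assumes z: "z \<in> S" "\<not> accessible N w p z x"
  shows "u \<in> S \<Longrightarrow> hit_before n u x + taboo_pow N w p x k u z \<le> 1"
proof (induction k arbitrary: n u)
  case 0
  then show ?case using hit_before_eq_0[OF z] hit_before_le_1 by auto
next
  case (Suc k)
  have "hit_before (Suc (Suc n)) u x + taboo_pow N w p x (Suc k) u z
      = (\<Sum>l<N. p l u * (if w l u = x then 1
           else hit_before (Suc n) (w l u) x + taboo_pow N w p x k (w l u) z))"
    unfolding hit_before_Suc_Suc taboo_pow.simps sum.distrib[symmetric]
    by (intro sum.cong) (auto simp: distrib_left)
  also have "\<dots> \<le> 1"
    using Suc by (intro sum_weighted_le_1) (auto simp: maps_into)
  finally show ?case using hit_before_mono[OF Suc.prems, of n "Suc (Suc n)" x] by linarith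
qed

lemma trans_pow_pos_imp_taboo_pow_pos_or_earlier:
  "u \<in> S \<Longrightarrow> 0 < trans_pow N w p k u z \<Longrightarrow>
     0 < taboo_pow N w p x k u z \<or> (\<exists>j<k. 0 < trans_pow N w p j x z)"
proof (induction k arbitrary: u)
  case (Suc k)
  then obtain l where l: "l < N" "0 < trans_pow N w p k (w l u) z"
    using sum_weighted_pos_obtain[of u "\<lambda>l. trans_pow N w p k (w l u) z"] by auto
  show ?case
  proof (cases "w l u = x")
    case True
    then show ?thesis using l by auto
  next
    case False
    from Suc.IH[OF maps_into[OF l(1) Suc.prems(1)] l(2)] show ?thesis
    proof
      assume "0 < taboo_pow N w p x k (w l u) z"
      then have "0 < taboo_pow N w p x (Suc k) u z"
        using False l(1) Suc.prems(1)
        by (simp add: sum_weighted_pos[where l = l] taboo_pow_nonneg maps_into)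
      then show ?thesis ..
    qed auto
  qed
qed (simp split: if_splits)

lemma trans_pow_pos_imp_taboo_pow_pos:
  "x \<in> S \<Longrightarrow> 0 < trans_pow N w p k x z \<Longrightarrow> \<exists>k'. 0 < taboo_pow N w p x k' x z"
proof (induction k rule: less_induct)
  case (less k)
  then show ?case using trans_pow_pos_imp_taboo_pow_pos_or_earlier[of x k z x] by blast
qed

lemma recurrent_accessible_sym:
  assumes rec: "recurrent N w p x" and x: "x \<in> S" and z: "z \<in> S"
    and xz: "accessible N w p x z"
  shows "accessible N w p z x"
proof (rule ccontr)
  assume zx: "\<not> accessible N w p z x"
  obtain k where "0 < trans_pow N w p k x z" using xz by (auto simp: accessible_def)
  then obtain k' where escape: "0 < taboo_pow N w p x k' x z"
    using trans_pow_pos_imp_taboo_pow_pos x by blast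
  have bound: "(\<Sum>m<n. first_passage N w p m x x) \<le> 1 - taboo_pow N w p x k' x z" for n
    using hit_before_add_taboo_pow_le_1[OF z zx x, of n k'] by (simp add: hit_before_def)
  have "summable (\<lambda>m. first_passage N w p m x x)"
    using bound first_passage_nonneg x by (intro summableI_nonneg_bounded) auto
  then have "(\<Sum>m. first_passage N w p m x x) \<le> 1 - taboo_pow N w p x k' x z"
    using bound by (rule suminf_le_const)
  with rec escape show False by (simp add: recurrent_def)
qed

lemma recurrent_comm_class_closed:
  assumes A: "recurrent_comm_class S N w p A" and x: "x \<in> A" and z: "z \<in> S"
    and xz: "accessible N w p x z"
  shows "z \<in> A"
proof -
  have cls: "comm_class S N w p A" and rec: "recurrent N w p x"
    using A x by (auto simp: recurrent_comm_class_def)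
  then have AS: "A \<subseteq> S" and mutual: "mutually_accessible_set N w p A"
    by (auto simp: comm_class_def)
  have zx: "accessible N w p z x"
    using recurrent_accessible_sym[OF rec _ z xz] x AS by blast
  have "accessible N w p a z \<and> accessible N w p z a" if "a \<in> A" for a
  proof (cases "a = x")
    case False
    then have "accessible N w p a x" "accessible N w p x a"
      using mutual that x by (auto simp: mutually_accessible_set_def)
    then show ?thesis using accessible_trans xz zx that x z AS by blast
  qed (use xz zx in simp)
  then have "mutually_accessible_set N w p (insert z A)"
    using mutual by (auto simp: mutually_accessible_set_def)
  then have "insert z A = A" using cls AS z by (auto simp: comm_class_def)
  then show ?thesis by blast
qed

end

theorem lemma5:
  fixes \<delta> :: real and S :: "(real^'n) set" and N :: nat
    and w :: "nat \<Rightarrow> real^'n \<Rightarrow> real^'n" and p :: "nat \<Rightarrow> real^'n \<Rightarrow> real"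
    and i :: nat and A Mj :: "(real^'n) set" and x :: "real^'n"
  assumes "is_DIFS \<delta> S N w p"
    and "i < N"
    and "min_absorbing_exists (w i) S"
    and "recurrent_comm_class S N w p A"
    and "Mj \<in> absorbing_components (w i) S"
    and "x \<in> S" and "x \<in> A" and "x \<in> basin (w i) S Mj"
  shows "Mj \<subseteq> A"
proof
  interpret ifs_markov_chain S N w p
    using assms(1) by unfold_locales (simp_all add: is_DIFS_def image_subset_iff)
  fix z assume z: "z \<in> Mj"
  then obtain k where k: "k \<ge> 1" "(w i ^^ k) x = z"
    using basin_reaches_component[OF assms(3,5,8)] by blast
  then have "accessible N w p x z"
    using trans_pow_funpow_pos[OF assms(2,6), of k] by (auto simp: accessible_def)
  moreover have "z \<in> S"
    using funpow_maps_into[OF assms(2,6)] k(2) by blast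
  ultimately show "z \<in> A"
    using recurrent_comm_class_closed[OF assms(4,7)] by blast
qed

end
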